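(* Consider an $\mathsf n$-qubit system in which CNOT (and SWAP) gates can be applied only to pairs of qubits forming edges of a given connected undirected simple graph on the qubits. Then for any non-identity $\mathsf n$-qubit Pauli operator $P$ and any $\theta\in\mathbb R$, the unitary $e^{\mathrm i\frac\theta2P}$ can be implemented using one single-qubit rotation $e^{\mathrm i\frac\theta2\sigma^x}$, at most $2\mathsf n$ single-qubit Hadamard and Phase gates, and at most $2\mathsf n-2$ CNOT and SWAP gates (each on an edge of the graph).
   Context: A non-identity $\mathsf n$-qubit Pauli operator is a tensor product of $\mathbf 1_2,\sigma^x,\sigma^y,\sigma^z$ other than the identity. *)

theory Defs
  imports Complex_Main "Jordan_Normal_Form.Matrix"
begin

definition mat_exp :: "complex mat \<Rightarrow> complex mat" where
  "mat_exp A = mat (dim_row A) (dim_col A)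
      (\<lambda>(i,j). \<Sum>k. (A ^\<^sub>m k) $$ (i,j) / of_nat (fact k))"

datatype pauli = PI | PX | PY | PZ

fun pauli_entry :: "pauli \<Rightarrow> nat \<Rightarrow> nat \<Rightarrow> complex" where
  "pauli_entry PI i j = (if i = j then 1 else 0)"
| "pauli_entry PX i j = (if i \<noteq> j then 1 else 0)"
| "pauli_entry PY i j = (if i = 0 \<and> j = 1 then - \<i> else if i = 1 \<and> j = 0 then \<i> else 0)"
| "pauli_entry PZ i j = (if i = j then (if i = 0 then 1 else -1) else 0)"

definition pauli1 :: "pauli \<Rightarrow> complex mat" where
  "pauli1 s = mat 2 2 (\<lambda>(i,j). pauli_entry s i j)"

(* bit i of basis index a: computational basis state |b_0 ... b_{n-1}> has index sum b_i 2^i *)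
definition bit :: "nat \<Rightarrow> nat \<Rightarrow> nat" where
  "bit a i = a div 2 ^ i mod 2"

definition pauli_mat :: "pauli list \<Rightarrow> complex mat" where
  "pauli_mat ps = mat (2 ^ length ps) (2 ^ length ps)
     (\<lambda>(a,b). \<Prod>i<length ps. pauli_entry (ps ! i) (bit a i) (bit b i))"

definition non_identity_pauli :: "pauli list \<Rightarrow> bool" where
  "non_identity_pauli ps \<longleftrightarrow> (\<exists>i<length ps. ps ! i \<noteq> PI)"

definition embed1 :: "nat \<Rightarrow> nat \<Rightarrow> complex mat \<Rightarrow> complex mat" where
  "embed1 n q U = mat (2 ^ n) (2 ^ n)
     (\<lambda>(a,b). if (\<forall>i<n. i \<noteq> q \<longrightarrow> bit a i = bit b i) then U $$ (bit a q, bit b q) else 0)"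

definition perm_mat :: "nat \<Rightarrow> ((nat \<Rightarrow> nat) \<Rightarrow> nat \<Rightarrow> nat) \<Rightarrow> complex mat" where
  "perm_mat n f = mat (2 ^ n) (2 ^ n)
     (\<lambda>(a,b). if (\<forall>i<n. bit a i = f (bit b) i) then 1 else 0)"

definition hadamard :: "complex mat" where
  "hadamard = mat 2 2 (\<lambda>(i,j). if i = 1 \<and> j = 1 then - 1 / sqrt 2 else 1 / sqrt 2)"

definition phase_S :: "complex mat" where
  "phase_S = mat 2 2 (\<lambda>(i,j). if i = j then (if i = 0 then 1 else \<i>) else 0)"

definition phase_Sdg :: "complex mat" where
  "phase_Sdg = mat 2 2 (\<lambda>(i,j). if i = j then (if i = 0 then 1 else - \<i>) else 0)"

definition rot_x :: "real \<Rightarrow> complex mat" where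
  "rot_x \<theta> = mat_exp ((\<i> * complex_of_real (\<theta> / 2)) \<cdot>\<^sub>m pauli1 PX)"

datatype gate =
    Rx real nat
  | H nat
  | S nat
  | Sdg nat
  | CNOT nat nat     (* control, target *)
  | SWAP nat nat

fun gate_mat :: "nat \<Rightarrow> gate \<Rightarrow> complex mat" where
  "gate_mat n (Rx \<theta> q) = embed1 n q (rot_x \<theta>)"
| "gate_mat n (H q) = embed1 n q hadamard"
| "gate_mat n (S q) = embed1 n q phase_S"
| "gate_mat n (Sdg q) = embed1 n q phase_Sdg"
| "gate_mat n (CNOT c t) =
     perm_mat n (\<lambda>x i. if i = t then (x t + x c) mod 2 else x i)"
| "gate_mat n (SWAP c t) =
     perm_mat n (\<lambda>x i. x (if i = c then t else if i = t then c else i))"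

(* circuit [g1,...,gk] applies g1 first: unitary gk * ... * g1 *)
fun circ_mat :: "nat \<Rightarrow> gate list \<Rightarrow> complex mat" where
  "circ_mat n [] = 1\<^sub>m (2 ^ n)"
| "circ_mat n (g # gs) = circ_mat n gs * gate_mat n g"

fun is_Rx :: "gate \<Rightarrow> bool" where
  "is_Rx (Rx _ _) = True" | "is_Rx _ = False"

fun is_HS :: "gate \<Rightarrow> bool" where
  "is_HS (H _) = True" | "is_HS (S _) = True" | "is_HS (Sdg _) = True" | "is_HS _ = False"

fun is_2q :: "gate \<Rightarrow> bool" where
  "is_2q (CNOT _ _) = True" | "is_2q (SWAP _ _) = True" | "is_2q _ = False"

fun gate_ok :: "nat \<Rightarrow> (nat \<Rightarrow> nat \<Rightarrow> bool) \<Rightarrow> gate \<Rightarrow> bool" where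
  "gate_ok n E (Rx _ q) = (q < n)"
| "gate_ok n E (H q) = (q < n)"
| "gate_ok n E (S q) = (q < n)"
| "gate_ok n E (Sdg q) = (q < n)"
| "gate_ok n E (CNOT c t) = (c < n \<and> t < n \<and> E c t)"
| "gate_ok n E (SWAP c t) = (c < n \<and> t < n \<and> E c t)"

definition connected_simple_graph :: "nat \<Rightarrow> (nat \<Rightarrow> nat \<Rightarrow> bool) \<Rightarrow> bool" where
  "connected_simple_graph n E \<longleftrightarrow>
     (\<forall>x y. E x y \<longrightarrow> x < n \<and> y < n) \<and>
     (\<forall>x y. E x y \<longrightarrow> E y x) \<and> (\<forall>x. \<not> E x x) \<and>
     (\<forall>x<n. \<forall>y<n. E\<^sup>*\<^sup>* x y)"

end

theory Submission
  imports Defs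
begin

(* Conjugation by a circuit U of Clifford gates commutes with the exponential, and for an
   involution A one has exp (c A) = cosh c + sinh c A.  So it suffices to find U, built from at
   most n Hadamard/phase gates and n - 1 CNOT/SWAP gates on edges, with U^-1 X_r U = P for a
   single-qubit X_r; the circuit U, Rx, U^-1 then uses every count twice.
   On each qubit, H or S^-1 turns sigma^z or sigma^y into sigma^x, so P becomes the X-string X_T
   on its support T.  Order the vertices so that each has an earlier neighbour, and remove the
   last vertex v of T by induction: with an earlier neighbour u, conjugation by CNOT u v maps
   X_(T - {v}) to X_T if u is in T, and conjugation by SWAP u v maps X_(T - {v} + {u}) to X_T
   otherwise.  The first vertex r is left, at the cost of one gate per further vertex. *)

lemma bit_less_2: "Defs.bit a i < 2"
  by (simp add: Defs.bit_def)

lemma bit_cases: "Defs.bit a i = 0 \<or> Defs.bit a i = 1"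
  using bit_less_2[of a i] by linarith

lemma bit_0: "Defs.bit a 0 = a mod 2"
  by (simp add: Defs.bit_def)

lemma bit_Suc: "Defs.bit a (Suc i) = Defs.bit (a div 2) i"
  by (simp add: Defs.bit_def div_mult2_eq)

lemma bit_eqI:
  assumes "a < 2 ^ n" "b < 2 ^ n" "\<And>i. i < n \<Longrightarrow> Defs.bit a i = Defs.bit b i"
  shows "a = b"
  using assms
proof (induction n arbitrary: a b)
  case (Suc n)
  have "a div 2 = b div 2"
  proof (rule Suc.IH)
    show "a div 2 < 2 ^ n" "b div 2 < 2 ^ n"
      using Suc.prems(1,2) by simp_all
    show "Defs.bit (a div 2) i = Defs.bit (b div 2) i" if "i < n" for i
      using Suc.prems(3)[of "Suc i"] that by (simp add: bit_Suc)
  qed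
  moreover have "a mod 2 = b mod 2"
    using Suc.prems(3)[of 0] by (simp add: bit_0)
  ultimately show ?case
    by (metis div_mult_mod_eq)
qed simp

lemma ex_index_with_bits:
  assumes "\<forall>i<n. y i < 2"
  shows "\<exists>c<2 ^ n. \<forall>i<n. Defs.bit c i = y i"
  using assms
proof (induction n arbitrary: y)
  case (Suc n)
  obtain c where c: "c < 2 ^ n" "\<forall>i<n. Defs.bit c i = y (Suc i)"
    using Suc.IH[of "\<lambda>i. y (Suc i)"] Suc.prems by auto
  have y0: "y 0 < 2"
    using Suc.prems by simp
  have "Defs.bit (y 0 + 2 * c) i = y i" if "i < Suc n" for i
  proof (cases i)
    case 0
    then show ?thesis
      using y0 by (simp add: bit_0)
  next
    case (Suc j)
    then show ?thesis
      using y0 c(2) that by (simp add: bit_Suc)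
  qed
  moreover have "y 0 + 2 * c < 2 ^ Suc n"
    using c(1) y0 by simp
  ultimately show ?case
    by blast
qed simp

lemma sum_lessThan_double:
  fixes g :: "nat \<Rightarrow> 'a::comm_monoid_add"
  shows "(\<Sum>c<2 * m. g c) = (\<Sum>c<m. g (2 * c) + g (2 * c + 1))"
  by (induction m) (simp_all add: add.assoc)

lemma sum_index_prod_bits:
  fixes h :: "nat \<Rightarrow> nat \<Rightarrow> 'a::comm_semiring_1"
  shows "(\<Sum>c<2 ^ n. \<Prod>i<n. h i (Defs.bit c i)) = (\<Prod>i<n. \<Sum>t<2. h i t)"
proof (induction n arbitrary: h)
  case (Suc n)
  let ?R = "\<lambda>c. \<Prod>i<n. h (Suc i) (Defs.bit c i)"
  have split: "(\<Prod>i<Suc n. h i (Defs.bit (2 * c + t) i)) = h 0 t * ?R c" if "t < 2" for t c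
  proof -
    have "(2 * c + t) mod 2 = t" "(2 * c + t) div 2 = c"
      using that by simp_all
    then show ?thesis
      by (simp only: prod.lessThan_Suc_shift bit_0 bit_Suc)
  qed
  have "(\<Sum>c<2 ^ Suc n. \<Prod>i<Suc n. h i (Defs.bit c i)) = (\<Sum>c<2 ^ n. (h 0 0 + h 0 1) * ?R c)"
    using split[of 0] split[of 1] by (simp only: power_Suc sum_lessThan_double) (simp add: distrib_right)
  also have "\<dots> = (h 0 0 + h 0 1) * (\<Prod>i<n. \<Sum>t<2. h (Suc i) t)"
    by (simp only: Suc.IH[of "\<lambda>i. h (Suc i)"] flip: sum_distrib_left)
  also have "\<dots> = (\<Prod>i<Suc n. \<Sum>t<2. h i t)"
    by (simp only: prod.lessThan_Suc_shift) (simp add: numeral_2_eq_2)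
  finally show ?case .
qed simp

lemma index_mult_carrier_mat:
  assumes "A \<in> carrier_mat m k" "B \<in> carrier_mat k l" "i < m" "j < l"
  shows "(A * B) $$ (i, j) = (\<Sum>t<k. A $$ (i, t) * B $$ (t, j))"
  using assms by (simp add: scalar_prod_def atLeast0LessThan)

lemma prod_if_1_0:
  "finite A \<Longrightarrow> (\<Prod>i\<in>A. if P i then 1 else 0) = (if \<forall>i\<in>A. P i then 1 else (0::'a::comm_semiring_1))"
  by (induction A rule: finite_induct) auto

section \<open>Tensor products of one-qubit matrices\<close>

definition tensor_mat :: "nat \<Rightarrow> (nat \<Rightarrow> 'a::comm_ring_1 mat) \<Rightarrow> 'a mat" where
  "tensor_mat n F = mat (2 ^ n) (2 ^ n) (\<lambda>(a, b). \<Prod>i<n. F i $$ (Defs.bit a i, Defs.bit b i))"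

lemma tensor_mat_carrier [simp]: "tensor_mat n F \<in> carrier_mat (2 ^ n) (2 ^ n)"
  by (simp add: tensor_mat_def)

lemma tensor_mat_cong: "(\<And>i. i < n \<Longrightarrow> F i = G i) \<Longrightarrow> tensor_mat n F = tensor_mat n G"
  unfolding tensor_mat_def by (rule eq_matI) auto

lemma tensor_mat_mult:
  assumes "\<And>i. i < n \<Longrightarrow> F i \<in> carrier_mat 2 2" "\<And>i. i < n \<Longrightarrow> G i \<in> carrier_mat 2 2"
  shows "tensor_mat n F * tensor_mat n G = tensor_mat n (\<lambda>i. F i * G i)"
proof (rule eq_matI)
  fix a b
  assume "a < dim_row (tensor_mat n (\<lambda>i. F i * G i))" "b < dim_col (tensor_mat n (\<lambda>i. F i * G i))"
  then have ab: "a < 2 ^ n" "b < 2 ^ n"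
    by (auto simp: tensor_mat_def)
  have "(tensor_mat n F * tensor_mat n G) $$ (a, b)
      = (\<Sum>c<2 ^ n. \<Prod>i<n. F i $$ (Defs.bit a i, Defs.bit c i) * G i $$ (Defs.bit c i, Defs.bit b i))"
    using ab by (simp add: tensor_mat_def scalar_prod_def atLeast0LessThan prod.distrib)
  also have "\<dots> = (\<Prod>i<n. \<Sum>t<2. F i $$ (Defs.bit a i, t) * G i $$ (t, Defs.bit b i))"
    by (rule sum_index_prod_bits)
  also have "\<dots> = (\<Prod>i<n. (F i * G i) $$ (Defs.bit a i, Defs.bit b i))"
  proof (rule prod.cong[OF refl])
    fix i
    assume "i \<in> {..<n}"
    then show "(\<Sum>t<2. F i $$ (Defs.bit a i, t) * G i $$ (t, Defs.bit b i)) = (F i * G i) $$ (Defs.bit a i, Defs.bit b i)"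
      using index_mult_carrier_mat[OF assms] bit_less_2 by simp
  qed
  finally show "(tensor_mat n F * tensor_mat n G) $$ (a, b) = tensor_mat n (\<lambda>i. F i * G i) $$ (a, b)"
    using ab by (simp add: tensor_mat_def)
qed (simp_all add: tensor_mat_def)

lemma tensor_mat_one: "tensor_mat n (\<lambda>_. 1\<^sub>m 2) = (1\<^sub>m (2 ^ n) :: 'a::comm_ring_1 mat)"
proof (rule eq_matI)
  fix a b
  assume "a < dim_row (1\<^sub>m (2 ^ n) :: 'a mat)" "b < dim_col (1\<^sub>m (2 ^ n) :: 'a mat)"
  then have ab: "a < 2 ^ n" "b < 2 ^ n"
    by simp_all
  then have "tensor_mat n (\<lambda>_. 1\<^sub>m 2) $$ (a, b)
      = (if \<forall>i\<in>{..<n}. Defs.bit a i = Defs.bit b i then 1 else (0::'a))"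
    by (simp add: tensor_mat_def bit_less_2 flip: prod_if_1_0)
  also have "\<dots> = (1\<^sub>m (2 ^ n) :: 'a mat) $$ (a, b)"
    using ab bit_eqI[of a n b] by auto
  finally show "tensor_mat n (\<lambda>_. 1\<^sub>m 2) $$ (a, b) = (1\<^sub>m (2 ^ n) :: 'a mat) $$ (a, b)" .
qed (simp_all add: tensor_mat_def)

lemma embed1_eq_tensor_mat:
  assumes "q < n"
  shows "embed1 n q U = tensor_mat n ((\<lambda>_. 1\<^sub>m 2)(q := U))"
proof (rule eq_matI)
  fix a b
  assume "a < dim_row (tensor_mat n ((\<lambda>_. 1\<^sub>m 2)(q := U)))" "b < dim_col (tensor_mat n ((\<lambda>_. 1\<^sub>m 2)(q := U)))"
  then have ab: "a < 2 ^ n" "b < 2 ^ n"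
    by (simp_all add: tensor_mat_def)
  have "(\<Prod>i\<in>{..<n} - {q}. ((\<lambda>_. 1\<^sub>m 2)(q := U)) i $$ (Defs.bit a i, Defs.bit b i))
      = (\<Prod>i\<in>{..<n} - {q}. if Defs.bit a i = Defs.bit b i then 1 else 0)"
    by (rule prod.cong) (simp_all add: bit_less_2)
  then have "(\<Prod>i<n. ((\<lambda>_. 1\<^sub>m 2)(q := U)) i $$ (Defs.bit a i, Defs.bit b i))
      = U $$ (Defs.bit a q, Defs.bit b q) * (\<Prod>i\<in>{..<n} - {q}. if Defs.bit a i = Defs.bit b i then 1 else 0)"
    using assms by (simp add: prod.remove[of _ q])
  then show "embed1 n q U $$ (a, b) = tensor_mat n ((\<lambda>_. 1\<^sub>m 2)(q := U)) $$ (a, b)"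
    using ab by (auto simp: embed1_def tensor_mat_def prod_if_1_0)
qed (simp_all add: embed1_def tensor_mat_def)

lemma embed1_carrier [simp]: "embed1 n q U \<in> carrier_mat (2 ^ n) (2 ^ n)"
  by (simp add: embed1_def)

lemma embed1_mult:
  assumes "q < n" "U \<in> carrier_mat 2 2" "V \<in> carrier_mat 2 2"
  shows "embed1 n q U * embed1 n q V = embed1 n q (U * V)"
  using assms by (simp add: embed1_eq_tensor_mat tensor_mat_mult) (rule tensor_mat_cong, simp)

lemma embed1_one: "q < n \<Longrightarrow> embed1 n q (1\<^sub>m 2) = 1\<^sub>m (2 ^ n)"
  by (simp add: embed1_eq_tensor_mat fun_upd_def tensor_mat_one)

lemma embed1_lincomb:
  assumes "U \<in> carrier_mat 2 2" "V \<in> carrier_mat 2 2"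
  shows "embed1 n q (c \<cdot>\<^sub>m U + d \<cdot>\<^sub>m V) = c \<cdot>\<^sub>m embed1 n q U + d \<cdot>\<^sub>m embed1 n q V"
proof (rule eq_matI)
  fix a b
  assume "a < dim_row (c \<cdot>\<^sub>m embed1 n q U + d \<cdot>\<^sub>m embed1 n q V)"
    "b < dim_col (c \<cdot>\<^sub>m embed1 n q U + d \<cdot>\<^sub>m embed1 n q V)"
  then show "embed1 n q (c \<cdot>\<^sub>m U + d \<cdot>\<^sub>m V) $$ (a, b) = (c \<cdot>\<^sub>m embed1 n q U + d \<cdot>\<^sub>m embed1 n q V) $$ (a, b)"
    using assms bit_less_2[of a q] bit_less_2[of b q]
    by (cases "\<forall>i<n. i \<noteq> q \<longrightarrow> Defs.bit a i = Defs.bit b i") (simp_all add: embed1_def, blast)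
qed (simp_all add: embed1_def)

definition pauli_string :: "nat \<Rightarrow> (nat \<Rightarrow> pauli) \<Rightarrow> complex mat" where
  "pauli_string n f = tensor_mat n (\<lambda>i. pauli1 (f i))"

lemma pauli1_carrier [simp]: "pauli1 s \<in> carrier_mat 2 2"
  by (simp add: pauli1_def)

lemma pauli_string_carrier [simp]: "pauli_string n f \<in> carrier_mat (2 ^ n) (2 ^ n)"
  by (simp add: pauli_string_def)

lemma pauli_string_cong: "(\<And>i. i < n \<Longrightarrow> f i = g i) \<Longrightarrow> pauli_string n f = pauli_string n g"
  unfolding pauli_string_def by (rule tensor_mat_cong) simp

lemma pauli_mat_eq_pauli_string: "pauli_mat ps = pauli_string (length ps) (nth ps)"
  by (rule eq_matI) (simp_all add: pauli_mat_def pauli_string_def tensor_mat_def pauli1_def bit_less_2)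

lemma pauli1_mult_self: "pauli1 s * pauli1 s = 1\<^sub>m 2"
  by (cases s) (auto intro!: eq_matI simp: pauli1_def scalar_prod_def numeral_2_eq_2 less_Suc_eq)

lemma pauli_string_mult_self: "pauli_string n f * pauli_string n f = 1\<^sub>m (2 ^ n)"
  by (simp add: pauli_string_def tensor_mat_mult pauli1_mult_self tensor_mat_one)

lemma hadamard_conj_X: "hadamard * pauli1 PX * hadamard = pauli1 PZ"
  by (rule eq_matI)
    (auto simp: hadamard_def pauli1_def scalar_prod_def numeral_2_eq_2 less_Suc_eq simp flip: of_real_mult)

lemma phase_S_conj_X: "phase_S * pauli1 PX * phase_Sdg = pauli1 PY"
  by (rule eq_matI) (auto simp: phase_S_def phase_Sdg_def pauli1_def scalar_prod_def numeral_2_eq_2 less_Suc_eq)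

lemma hadamard_mult_self: "hadamard * hadamard = 1\<^sub>m 2"
  by (rule eq_matI) (auto simp: hadamard_def scalar_prod_def numeral_2_eq_2 less_Suc_eq simp flip: of_real_mult)

lemma phase_S_mult_Sdg: "phase_S * phase_Sdg = 1\<^sub>m 2"
  by (rule eq_matI) (auto simp: phase_S_def phase_Sdg_def scalar_prod_def numeral_2_eq_2 less_Suc_eq)

lemma phase_Sdg_mult_S: "phase_Sdg * phase_S = 1\<^sub>m 2"
  by (rule eq_matI) (auto simp: phase_S_def phase_Sdg_def scalar_prod_def numeral_2_eq_2 less_Suc_eq)

lemma embed1_conj_pauli_string:
  assumes "q < n" "U \<in> carrier_mat 2 2" "V \<in> carrier_mat 2 2" "U * pauli1 (f q) * V = pauli1 s"
  shows "embed1 n q U * pauli_string n f * embed1 n q V = pauli_string n (f(q := s))"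
proof -
  let ?U = "(\<lambda>_. 1\<^sub>m 2)(q := U)" and ?V = "(\<lambda>_. 1\<^sub>m 2)(q := V)"
  have UV: "?U i \<in> carrier_mat 2 2" "?V i \<in> carrier_mat 2 2" for i
    using assms(2,3) by simp_all
  have UP: "?U i * pauli1 (f i) \<in> carrier_mat 2 2" for i
    by (rule mult_carrier_mat[OF UV(1) pauli1_carrier])
  have "embed1 n q U * pauli_string n f * embed1 n q V = tensor_mat n (\<lambda>i. ?U i * pauli1 (f i) * ?V i)"
    unfolding embed1_eq_tensor_mat[OF assms(1)] pauli_string_def
    using UV UP by (simp add: tensor_mat_mult)
  also have "\<dots> = pauli_string n (f(q := s))"
    unfolding pauli_string_def using assms(4)
    by (intro tensor_mat_cong) (simp add: left_mult_one_mat[OF pauli1_carrier] right_mult_one_mat[OF pauli1_carrier])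
  finally show ?thesis .
qed

section \<open>Exponentials of involutions\<close>

lemma power_smult_involution:
  fixes A :: "'a::comm_ring_1 mat"
  assumes "A \<in> carrier_mat d d" "A * A = 1\<^sub>m d"
  shows "(c \<cdot>\<^sub>m A) ^\<^sub>m k = c ^ k \<cdot>\<^sub>m (if even k then 1\<^sub>m d else A)"
proof (induction k)
  case 0
  then show ?case
    using assms(1) by (auto intro!: eq_matI)
next
  case (Suc k)
  have B: "(if even k then 1\<^sub>m d else A) \<in> carrier_mat d d"
    using assms(1) by simp
  have "(c \<cdot>\<^sub>m A) ^\<^sub>m Suc k = (c ^ k \<cdot>\<^sub>m (if even k then 1\<^sub>m d else A)) * (c \<cdot>\<^sub>m A)"
    by (simp add: Suc.IH)
  also have "\<dots> = (c ^ k * c) \<cdot>\<^sub>m ((if even k then 1\<^sub>m d else A) * A)"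
    using B assms(1) by (simp add: mult_smult_assoc_mat mult_smult_distrib) (auto intro!: eq_matI)
  also have "\<dots> = c ^ Suc k \<cdot>\<^sub>m (if even (Suc k) then 1\<^sub>m d else A)"
    using assms by (simp add: mult.commute)
  finally show ?case .
qed

lemma mat_exp_smult_involution:
  assumes "A \<in> carrier_mat d d" "A * A = 1\<^sub>m d"
  shows "mat_exp (c \<cdot>\<^sub>m A) = cosh c \<cdot>\<^sub>m 1\<^sub>m d + sinh c \<cdot>\<^sub>m A"
proof (rule eq_matI)
  fix i j
  assume "i < dim_row (cosh c \<cdot>\<^sub>m 1\<^sub>m d + sinh c \<cdot>\<^sub>m A)" "j < dim_col (cosh c \<cdot>\<^sub>m 1\<^sub>m d + sinh c \<cdot>\<^sub>m A)"
  then have ij: "i < d" "j < d"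
    using carrier_matD[OF assms(1)] by simp_all
  let ?e = "(1\<^sub>m d :: complex mat) $$ (i, j)" and ?a = "A $$ (i, j)"
  have "mat_exp (c \<cdot>\<^sub>m A) $$ (i, j) = (\<Sum>k. c ^ k * (if even k then ?e else ?a) / fact k)"
    using ij assms
    by (simp add: mat_exp_def power_smult_involution if_distrib[of "\<lambda>M. M $$ (i, j)"] cong: if_cong)
  also have "(\<lambda>k. c ^ k * (if even k then ?e else ?a) / fact k)
      = (\<lambda>k. (if even k then c ^ k /\<^sub>R fact k else 0) * ?e + (if even k then 0 else c ^ k /\<^sub>R fact k) * ?a)"
    by (rule ext) (simp add: scaleR_conv_of_real divide_inverse)
  also have "(\<Sum>k. (if even k then c ^ k /\<^sub>R fact k else 0) * ?e + (if even k then 0 else c ^ k /\<^sub>R fact k) * ?a)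
      = cosh c * ?e + sinh c * ?a"
    by (intro sums_unique[symmetric] sums_add sums_mult2 cosh_converges sinh_converges)
  finally show "mat_exp (c \<cdot>\<^sub>m A) $$ (i, j) = (cosh c \<cdot>\<^sub>m 1\<^sub>m d + sinh c \<cdot>\<^sub>m A) $$ (i, j)"
    using ij assms(1) by simp
qed (use carrier_matD[OF assms(1)] in \<open>simp_all add: mat_exp_def\<close>)

section \<open>Permutation matrices\<close>

definition bits_local :: "nat \<Rightarrow> ((nat \<Rightarrow> nat) \<Rightarrow> nat \<Rightarrow> nat) \<Rightarrow> bool" where
  "bits_local n f \<longleftrightarrow> (\<forall>x y. (\<forall>i<n. x i = y i) \<longrightarrow> (\<forall>i<n. f x i = f y i))"

definition bits_valued :: "nat \<Rightarrow> ((nat \<Rightarrow> nat) \<Rightarrow> nat \<Rightarrow> nat) \<Rightarrow> bool" where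
  "bits_valued n f \<longleftrightarrow> (\<forall>a i. i < n \<longrightarrow> f (Defs.bit a) i < 2)"

lemma bits_local_comp: "bits_local n f \<Longrightarrow> bits_local n g \<Longrightarrow> bits_local n (\<lambda>x. f (g x))"
  unfolding bits_local_def by metis

lemma perm_mat_carrier [simp]: "perm_mat n f \<in> carrier_mat (2 ^ n) (2 ^ n)"
  by (simp add: perm_mat_def)

lemma perm_mat_cong:
  "(\<And>a i. i < n \<Longrightarrow> f (Defs.bit a) i = g (Defs.bit a) i) \<Longrightarrow> perm_mat n f = perm_mat n g"
  unfolding perm_mat_def by (rule eq_matI) auto

lemma perm_mat_id: "perm_mat n (\<lambda>x. x) = 1\<^sub>m (2 ^ n)"
  unfolding perm_mat_def by (rule eq_matI) (auto dest: bit_eqI)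

lemma perm_mat_mult:
  assumes "bits_local n f" "bits_valued n g"
  shows "perm_mat n f * perm_mat n g = perm_mat n (\<lambda>x. f (g x))"
proof (rule eq_matI)
  fix a b
  assume "a < dim_row (perm_mat n (\<lambda>x. f (g x)))" "b < dim_col (perm_mat n (\<lambda>x. f (g x)))"
  then have ab: "a < 2 ^ n" "b < 2 ^ n"
    by (simp_all add: perm_mat_def)
  obtain c0 where c0: "c0 < 2 ^ n" "\<forall>i<n. Defs.bit c0 i = g (Defs.bit b) i"
    using ex_index_with_bits[of n "g (Defs.bit b)"] assms(2) by (auto simp: bits_valued_def)
  let ?h = "\<lambda>c. (if \<forall>i<n. Defs.bit a i = f (Defs.bit c) i then 1 else 0)
      * (if \<forall>i<n. Defs.bit c i = g (Defs.bit b) i then 1 else (0::complex))"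
  have "?h c = 0" if "c \<in> {..<2 ^ n} - {c0}" for c
  proof -
    have "\<not> (\<forall>i<n. Defs.bit c i = g (Defs.bit b) i)"
      using that c0 bit_eqI[of c n c0] by auto
    then show ?thesis
      by simp
  qed
  then have rest: "(\<Sum>c\<in>{..<2 ^ n} - {c0}. ?h c) = 0"
    by (intro sum.neutral) blast
  have "(perm_mat n f * perm_mat n g) $$ (a, b) = (\<Sum>c<2 ^ n. ?h c)"
    using ab by (simp add: perm_mat_def scalar_prod_def atLeast0LessThan)
  also have "\<dots> = ?h c0"
    using c0(1) rest by (simp add: sum.remove)
  also have "\<dots> = perm_mat n (\<lambda>x. f (g x)) $$ (a, b)"
  proof -
    have "\<forall>i<n. f (Defs.bit c0) i = f (g (Defs.bit b)) i"
      using assms(1) c0(2) unfolding bits_local_def by blast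
    then show ?thesis
      using ab c0(2) by (simp add: perm_mat_def)
  qed
  finally show "(perm_mat n f * perm_mat n g) $$ (a, b) = perm_mat n (\<lambda>x. f (g x)) $$ (a, b)" .
qed (simp_all add: perm_mat_def)

definition flip_bits :: "nat set \<Rightarrow> (nat \<Rightarrow> nat) \<Rightarrow> nat \<Rightarrow> nat" where
  "flip_bits T x i = (if i \<in> T then 1 - x i else x i)"

definition cnot_bits :: "nat \<Rightarrow> nat \<Rightarrow> (nat \<Rightarrow> nat) \<Rightarrow> nat \<Rightarrow> nat" where
  "cnot_bits c t x i = (if i = t then (x t + x c) mod 2 else x i)"

definition swap_bits :: "nat \<Rightarrow> nat \<Rightarrow> (nat \<Rightarrow> nat) \<Rightarrow> nat \<Rightarrow> nat" where
  "swap_bits c t x i = x (if i = c then t else if i = t then c else i)"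

lemma bits_local_flip_bits: "bits_local n (flip_bits T)"
  by (simp add: bits_local_def flip_bits_def)

lemma bits_local_cnot_bits: "c < n \<Longrightarrow> t < n \<Longrightarrow> bits_local n (cnot_bits c t)"
  by (simp add: bits_local_def cnot_bits_def)

lemma bits_local_swap_bits: "c < n \<Longrightarrow> t < n \<Longrightarrow> bits_local n (swap_bits c t)"
  by (simp add: bits_local_def swap_bits_def)

lemma bits_valued_flip_bits: "bits_valued n (flip_bits T)"
  by (simp add: bits_valued_def flip_bits_def bit_less_2 less_imp_diff_less)

lemma bits_valued_cnot_bits: "bits_valued n (cnot_bits c t)"
  by (simp add: bits_valued_def cnot_bits_def bit_less_2)

lemma bits_valued_swap_bits: "bits_valued n (swap_bits c t)"
  by (simp add: bits_valued_def swap_bits_def bit_less_2)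

lemma perm_mat_conj:
  assumes "bits_local n f" "bits_valued n f" "bits_local n h" "bits_valued n h"
  shows "perm_mat n f * perm_mat n h * perm_mat n f = perm_mat n (\<lambda>x. f (h (f x)))"
  using assms by (simp add: perm_mat_mult bits_local_comp)

declare gate_mat.simps(5,6) [simp del]

lemma gate_mat_CNOT: "gate_mat n (CNOT c t) = perm_mat n (cnot_bits c t)"
  by (simp add: gate_mat.simps(5) cnot_bits_def [abs_def])

lemma gate_mat_SWAP: "gate_mat n (SWAP c t) = perm_mat n (swap_bits c t)"
  by (simp add: gate_mat.simps(6) swap_bits_def [abs_def])

lemma hadamard_carrier [simp]: "hadamard \<in> carrier_mat 2 2"
  by (simp add: hadamard_def)

lemma phase_S_carrier [simp]: "phase_S \<in> carrier_mat 2 2"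
  by (simp add: phase_S_def)

lemma phase_Sdg_carrier [simp]: "phase_Sdg \<in> carrier_mat 2 2"
  by (simp add: phase_Sdg_def)

lemma gate_mat_carrier [simp]: "gate_mat n g \<in> carrier_mat (2 ^ n) (2 ^ n)"
  by (cases g) (simp_all add: gate_mat_CNOT gate_mat_SWAP)

lemma circ_mat_carrier [simp]: "circ_mat n gs \<in> carrier_mat (2 ^ n) (2 ^ n)"
  by (induction gs) simp_all

lemma circ_mat_append: "circ_mat n (gs @ hs) = circ_mat n hs * circ_mat n gs"
  by (induction gs)
    (simp_all add: right_mult_one_mat[OF circ_mat_carrier] assoc_mult_mat[OF circ_mat_carrier circ_mat_carrier gate_mat_carrier])

definition x_string :: "nat \<Rightarrow> nat set \<Rightarrow> complex mat" where
  "x_string n T = pauli_string n (\<lambda>i. if i \<in> T then PX else PI)"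

lemma x_string_carrier [simp]: "x_string n T \<in> carrier_mat (2 ^ n) (2 ^ n)"
  by (simp add: x_string_def)

lemma x_string_eq_perm_mat: "x_string n T = perm_mat n (flip_bits T)"
proof (rule eq_matI)
  fix a b
  assume "a < dim_row (perm_mat n (flip_bits T))" "b < dim_col (perm_mat n (flip_bits T))"
  then have ab: "a < 2 ^ n" "b < 2 ^ n"
    by (simp_all add: perm_mat_def)
  have "pauli_entry (if i \<in> T then PX else PI) (Defs.bit a i) (Defs.bit b i)
      = (if Defs.bit a i = flip_bits T (Defs.bit b) i then 1 else 0)" for i
    using bit_cases[of a i] bit_cases[of b i] by (auto simp: flip_bits_def)
  then show "x_string n T $$ (a, b) = perm_mat n (flip_bits T) $$ (a, b)"
    using ab by (simp add: x_string_def pauli_string_def tensor_mat_def pauli1_def perm_mat_def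
        bit_less_2 prod_if_1_0)
qed (simp_all add: perm_mat_def x_string_def pauli_string_def tensor_mat_def)

lemma CNOT_conj_x_string:
  assumes "c < n" "t < n" "c \<noteq> t" "c \<in> T" "t \<notin> T"
  shows "gate_mat n (CNOT c t) * x_string n T * gate_mat n (CNOT c t) = x_string n (insert t T)"
proof -
  have "gate_mat n (CNOT c t) * x_string n T * gate_mat n (CNOT c t)
      = perm_mat n (\<lambda>x. cnot_bits c t (flip_bits T (cnot_bits c t x)))"
    using assms(1,2) unfolding gate_mat_CNOT x_string_eq_perm_mat
    by (simp add: perm_mat_conj bits_local_cnot_bits bits_valued_cnot_bits bits_local_flip_bits bits_valued_flip_bits)
  also have "\<dots> = x_string n (insert t T)"
    unfolding x_string_eq_perm_mat
  proof (rule perm_mat_cong)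
    fix a i
    show "cnot_bits c t (flip_bits T (cnot_bits c t (Defs.bit a))) i = flip_bits (insert t T) (Defs.bit a) i"
      using assms(3-5) bit_cases[of a t] bit_cases[of a c] by (auto simp: cnot_bits_def flip_bits_def)
  qed
  finally show ?thesis .
qed

lemma SWAP_conj_x_string:
  assumes "c < n" "t < n" "c \<in> T" "t \<notin> T"
  shows "gate_mat n (SWAP c t) * x_string n T * gate_mat n (SWAP c t) = x_string n (insert t (T - {c}))"
proof -
  have "gate_mat n (SWAP c t) * x_string n T * gate_mat n (SWAP c t)
      = perm_mat n (\<lambda>x. swap_bits c t (flip_bits T (swap_bits c t x)))"
    using assms(1,2) unfolding gate_mat_SWAP x_string_eq_perm_mat
    by (simp add: perm_mat_conj bits_local_swap_bits bits_valued_swap_bits bits_local_flip_bits bits_valued_flip_bits)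
  also have "\<dots> = x_string n (insert t (T - {c}))"
    unfolding x_string_eq_perm_mat
    using assms(3,4) by (intro perm_mat_cong) (auto simp: swap_bits_def flip_bits_def)
  finally show ?thesis .
qed

section \<open>Conjugation by Clifford circuits\<close>

(* Rx is mapped to itself: gate_inv inverts only the Clifford gates. *)
fun gate_inv :: "gate \<Rightarrow> gate" where
  "gate_inv (S q) = Sdg q"
| "gate_inv (Sdg q) = S q"
| "gate_inv g = g"

definition circuit_inv :: "gate list \<Rightarrow> gate list" where
  "circuit_inv gs = rev (map gate_inv gs)"

lemma gate_classes_disjoint:
  "is_HS g \<Longrightarrow> \<not> is_Rx g \<and> \<not> is_2q g" "is_2q g \<Longrightarrow> \<not> is_Rx g \<and> \<not> is_HS g"
  by (cases g; simp)+

lemma gate_inv_classes [simp]: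
  "is_Rx (gate_inv g) = is_Rx g" "is_HS (gate_inv g) = is_HS g" "is_2q (gate_inv g) = is_2q g"
  "gate_ok n E (gate_inv g) = gate_ok n E g"
  by (cases g; simp)+

lemma filter_circuit_inv:
  "(\<And>g. P (gate_inv g) = P g) \<Longrightarrow> filter P (circuit_inv gs) = circuit_inv (filter P gs)"
  by (induction gs) (simp_all add: circuit_inv_def)

lemma length_circuit_inv [simp]: "length (circuit_inv gs) = length gs"
  by (simp add: circuit_inv_def)

lemma gate_mat_inv_mult:
  assumes "gate_ok n E g" "\<not> is_Rx g" "irreflp E"
  shows "gate_mat n (gate_inv g) * gate_mat n g = 1\<^sub>m (2 ^ n)"
proof (cases g)
  case (CNOT c t)
  then have ct: "c < n" "t < n" "c \<noteq> t"
    using assms(1,3) by (auto simp: irreflp_def)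
  have "perm_mat n (cnot_bits c t) * perm_mat n (cnot_bits c t) = perm_mat n (\<lambda>x. x)"
    unfolding perm_mat_mult[OF bits_local_cnot_bits[OF ct(1,2)] bits_valued_cnot_bits]
  proof (rule perm_mat_cong)
    fix a i
    show "cnot_bits c t (cnot_bits c t (Defs.bit a)) i = Defs.bit a i"
      using ct(3) bit_cases[of a t] bit_cases[of a c] by (auto simp: cnot_bits_def)
  qed
  then show ?thesis
    using CNOT by (simp add: gate_mat_CNOT perm_mat_id)
next
  case (SWAP c t)
  then have ct: "c < n" "t < n"
    using assms(1) by simp_all
  have "perm_mat n (swap_bits c t) * perm_mat n (swap_bits c t) = perm_mat n (\<lambda>x. x)"
    unfolding perm_mat_mult[OF bits_local_swap_bits[OF ct] bits_valued_swap_bits]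
    by (intro perm_mat_cong) (auto simp: swap_bits_def)
  then show ?thesis
    using SWAP by (simp add: gate_mat_SWAP perm_mat_id)
qed (use assms in \<open>simp_all add: embed1_mult embed1_one hadamard_mult_self phase_S_mult_Sdg phase_Sdg_mult_S\<close>)

definition conj_circ :: "nat \<Rightarrow> gate list \<Rightarrow> complex mat \<Rightarrow> complex mat" where
  "conj_circ n gs M = circ_mat n (circuit_inv gs) * M * circ_mat n gs"

lemma conj_circ_Nil: "M \<in> carrier_mat (2 ^ n) (2 ^ n) \<Longrightarrow> conj_circ n [] M = M"
  by (simp add: conj_circ_def circuit_inv_def)

lemma conj_circ_single: "conj_circ n [g] M = gate_mat n (gate_inv g) * M * gate_mat n g"
  by (simp add: conj_circ_def circuit_inv_def left_mult_one_mat[OF gate_mat_carrier])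

lemma conj_circ_append:
  assumes "M \<in> carrier_mat (2 ^ n) (2 ^ n)"
  shows "conj_circ n (gs @ hs) M = conj_circ n gs (conj_circ n hs M)"
proof -
  let ?Ig = "circ_mat n (circuit_inv gs)" and ?Ih = "circ_mat n (circuit_inv hs)"
    and ?Cg = "circ_mat n gs" and ?Ch = "circ_mat n hs"
  have "conj_circ n (gs @ hs) M = ?Ig * ?Ih * M * (?Ch * ?Cg)"
    by (simp add: conj_circ_def circuit_inv_def circ_mat_append)
  also have "\<dots> = ?Ig * (?Ih * M * ?Ch) * ?Cg"
    using assms
    by (simp add: assoc_mult_mat[of _ "2 ^ n" "2 ^ n" _ "2 ^ n" _ "2 ^ n"] mult_carrier_mat[of _ "2 ^ n" "2 ^ n" _ "2 ^ n"])
  finally show ?thesis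
    by (simp add: conj_circ_def)
qed

lemma conj_circ_Cons:
  "M \<in> carrier_mat (2 ^ n) (2 ^ n) \<Longrightarrow> conj_circ n (g # gs) M = conj_circ n [g] (conj_circ n gs M)"
  using conj_circ_append[of M n "[g]" gs] by simp

lemma conj_circ_lincomb:
  assumes "M \<in> carrier_mat (2 ^ n) (2 ^ n)" "N \<in> carrier_mat (2 ^ n) (2 ^ n)"
  shows "conj_circ n gs (a \<cdot>\<^sub>m M + b \<cdot>\<^sub>m N) = a \<cdot>\<^sub>m conj_circ n gs M + b \<cdot>\<^sub>m conj_circ n gs N"
  using assms
  by (simp add: conj_circ_def mult_carrier_mat[of _ "2 ^ n" "2 ^ n" _ "2 ^ n"]
      mult_add_distrib_mat[of _ "2 ^ n" "2 ^ n" _ "2 ^ n"] add_mult_distrib_mat[of _ "2 ^ n" "2 ^ n" _ _ "2 ^ n"]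
      mult_smult_distrib[of _ "2 ^ n" "2 ^ n" _ "2 ^ n"] mult_smult_assoc_mat[of _ "2 ^ n" "2 ^ n" _ "2 ^ n"])

lemma conj_circ_one:
  assumes "\<forall>g\<in>set gs. gate_ok n E g \<and> \<not> is_Rx g" "irreflp E"
  shows "conj_circ n gs (1\<^sub>m (2 ^ n)) = 1\<^sub>m (2 ^ n)"
  using assms(1)
proof (induction gs)
  case Nil
  then show ?case
    by (simp add: conj_circ_Nil)
next
  case (Cons g gs)
  then show ?case
    by (simp add: conj_circ_Cons conj_circ_single right_mult_one_mat[OF gate_mat_carrier]
        gate_mat_inv_mult[OF _ _ assms(2)])
qed

section \<open>Basis change to X-strings\<close>

definition basis_change :: "pauli \<Rightarrow> nat \<Rightarrow> gate list" where
  "basis_change s q = (case s of PY \<Rightarrow> [Sdg q] | PZ \<Rightarrow> [H q] | _ \<Rightarrow> [])"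

definition basis_change_circuit :: "(nat \<Rightarrow> pauli) \<Rightarrow> nat \<Rightarrow> gate list" where
  "basis_change_circuit f k = concat (map (\<lambda>q. basis_change (f q) q) [0..<k])"

definition pauli_to_X :: "pauli \<Rightarrow> pauli" where
  "pauli_to_X s = (if s = PI then PI else PX)"

lemma conj_basis_change:
  assumes "q < n"
  shows "conj_circ n (basis_change (f q) q) (pauli_string n (f(q := pauli_to_X (f q)))) = pauli_string n f"
proof (cases "f q")
  case PY
  have "embed1 n q phase_S * pauli_string n (f(q := PX)) * embed1 n q phase_Sdg = pauli_string n (f(q := PX, q := PY))"
    using assms phase_S_conj_X by (intro embed1_conj_pauli_string) simp_all
  then show ?thesis
    using PY by (simp add: basis_change_def pauli_to_X_def conj_circ_single fun_upd_idem)
next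
  case PZ
  have "embed1 n q hadamard * pauli_string n (f(q := PX)) * embed1 n q hadamard = pauli_string n (f(q := PX, q := PZ))"
    using assms hadamard_conj_X by (intro embed1_conj_pauli_string) simp_all
  then show ?thesis
    using PZ by (simp add: basis_change_def pauli_to_X_def conj_circ_single fun_upd_idem)
qed (simp_all add: basis_change_def pauli_to_X_def conj_circ_Nil fun_upd_idem)

lemma conj_basis_change_circuit:
  assumes "k \<le> n"
  shows "conj_circ n (basis_change_circuit f k) (pauli_string n (\<lambda>i. if i < k then pauli_to_X (f i) else f i))
    = pauli_string n f"
  using assms
proof (induction k)
  case 0
  then show ?case
    by (simp add: basis_change_circuit_def conj_circ_Nil)
next
  case (Suc k)
  let ?g = "\<lambda>i. if i < k then pauli_to_X (f i) else f i"
  have "(\<lambda>i. if i < Suc k then pauli_to_X (f i) else f i) = ?g(k := pauli_to_X (?g k))"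
    by (auto simp: less_Suc_eq)
  then have "conj_circ n (basis_change (f k) k) (pauli_string n (\<lambda>i. if i < Suc k then pauli_to_X (f i) else f i))
      = pauli_string n ?g"
    using conj_basis_change[of k n ?g] Suc.prems by simp
  then show ?case
    using Suc by (simp add: basis_change_circuit_def conj_circ_append)
qed

lemma basis_change_circuit_gates:
  assumes "k \<le> n" "g \<in> set (basis_change_circuit f k)"
  shows "is_HS g \<and> gate_ok n E g"
proof -
  obtain q where "q < k" "g \<in> set (basis_change (f q) q)"
    using assms(2) by (auto simp: basis_change_circuit_def)
  then show ?thesis
    using assms(1) by (cases "f q") (auto simp: basis_change_def)
qed

lemma length_basis_change_circuit: "length (basis_change_circuit f k) \<le> k"
proof (induction k)
  case (Suc k)
  have "length (basis_change (f k) k) \<le> 1"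
    by (simp add: basis_change_def split: pauli.split)
  then show ?case
    using Suc by (simp add: basis_change_circuit_def)
qed (simp add: basis_change_circuit_def)

section \<open>Spanning orders of connected graphs\<close>

inductive spanning_order :: "('a \<Rightarrow> 'a \<Rightarrow> bool) \<Rightarrow> 'a list \<Rightarrow> bool" for E where
  single: "spanning_order E [v]"
| snoc: "spanning_order E vs \<Longrightarrow> u \<in> set vs \<Longrightarrow> E u v \<Longrightarrow> spanning_order E (vs @ [v])"

lemma spanning_order_not_Nil: "spanning_order E vs \<Longrightarrow> vs \<noteq> []"
  by (induction rule: spanning_order.induct) simp_all

lemma rtranclp_exit_edge: "E\<^sup>*\<^sup>* x y \<Longrightarrow> x \<in> A \<Longrightarrow> y \<notin> A \<Longrightarrow> \<exists>a b. a \<in> A \<and> b \<notin> A \<and> E a b"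
  by (induction rule: rtranclp_induct) auto

lemma spanning_order_exists:
  assumes "finite V" "r \<in> V" "\<And>x y. E x y \<Longrightarrow> x \<in> V \<and> y \<in> V"
    and "\<And>x y. x \<in> V \<Longrightarrow> y \<in> V \<Longrightarrow> E\<^sup>*\<^sup>* x y"
  shows "\<exists>vs. spanning_order E vs \<and> distinct vs \<and> set vs = V"
proof -
  have "\<exists>vs. spanning_order E vs \<and> distinct vs \<and> set vs \<subseteq> V \<and> length vs = Suc k"
    if "Suc k \<le> card V" for k
    using that
  proof (induction k)
    case 0
    then show ?case
      using assms(2) by (intro exI[of _ "[r]"]) (simp add: spanning_order.single)
  next
    case (Suc k)
    then obtain vs where vs: "spanning_order E vs" "distinct vs" "set vs \<subseteq> V" "length vs = Suc k"
      by auto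
    then have "card (set vs) < card V"
      using Suc.prems by (simp add: distinct_card)
    then have "\<not> V \<subseteq> set vs"
      using card_mono[of "set vs" V] by auto
    then obtain y where y: "y \<in> V" "y \<notin> set vs"
      by blast
    have "hd vs \<in> set vs"
      using spanning_order_not_Nil[OF vs(1)] by simp
    then obtain a b where ab: "a \<in> set vs" "b \<notin> set vs" "E a b"
      using rtranclp_exit_edge[OF assms(4) _ y(2)] vs(3) y(1) by blast
    then have "spanning_order E (vs @ [b]) \<and> distinct (vs @ [b]) \<and> set (vs @ [b]) \<subseteq> V \<and>
        length (vs @ [b]) = Suc (Suc k)"
      using vs assms(3) by (simp add: spanning_order.snoc)
    then show ?case
      by blast
  qed
  moreover have "card V \<noteq> 0"
    using assms(1,2) by auto
  ultimately obtain vs where vs: "spanning_order E vs" "distinct vs" "set vs \<subseteq> V" "length vs = card V"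
    by (metis Suc_pred le_refl neq0_conv)
  then have "set vs = V"
    using assms(1) by (simp add: card_subset_eq distinct_card)
  then show ?thesis
    using vs by blast
qed

lemma conj_edge_gate_x_string:
  assumes "u < n" "v < n" "u \<noteq> v" "v \<in> T"
  shows "conj_circ n [if u \<in> T then CNOT u v else SWAP u v]
      (x_string n (if u \<in> T then T - {v} else insert u (T - {v}))) = x_string n T"
proof (cases "u \<in> T")
  case True
  then show ?thesis
    using assms CNOT_conj_x_string[of u n v "T - {v}"] by (simp add: conj_circ_single insert_absorb)
next
  case False
  then show ?thesis
    using assms SWAP_conj_x_string[of u n v "insert u (T - {v})"] by (simp add: conj_circ_single insert_absorb)
qed

lemma spanning_order_reduce_x_string:
  assumes "spanning_order E vs" "T \<subseteq> set vs" "T \<noteq> {}"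
    and "\<And>x y. E x y \<Longrightarrow> x < n \<and> y < n" "irreflp E"
  shows "\<exists>cs. (\<forall>g\<in>set cs. is_2q g \<and> gate_ok n E g) \<and> length cs < length vs \<and>
    conj_circ n cs (x_string n {hd vs}) = x_string n T"
  using assms(1-3)
proof (induction arbitrary: T rule: spanning_order.induct)
  case (single v)
  then have "T = {v}"
    by auto
  then show ?case
    by (intro exI[of _ "[]"]) (simp add: conj_circ_Nil)
next
  case (snoc vs u v)
  have hd: "hd (vs @ [v]) = hd vs"
    using spanning_order_not_Nil[OF snoc.hyps(1)] by (simp add: hd_append2)
  have uv: "u < n" "v < n" "u \<noteq> v"
    using snoc.hyps(3) assms(4,5) by (auto simp: irreflp_def)
  show ?case
  proof (cases "v \<in> T")
    case False
    then obtain cs where "\<forall>g\<in>set cs. is_2q g \<and> gate_ok n E g" "length cs < length vs"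
        "conj_circ n cs (x_string n {hd vs}) = x_string n T"
      using snoc.IH[of T] snoc.prems by auto
    then show ?thesis
      using hd by (intro exI[of _ cs]) simp
  next
    case True
    define T' where "T' = (if u \<in> T then T - {v} else insert u (T - {v}))"
    define g where "g = (if u \<in> T then CNOT u v else SWAP u v)"
    have "T' \<subseteq> set vs" "T' \<noteq> {}"
      using snoc.prems snoc.hyps(2) uv(3) by (auto simp: T'_def)
    then obtain cs where cs: "\<forall>g\<in>set cs. is_2q g \<and> gate_ok n E g" "length cs < length vs"
        "conj_circ n cs (x_string n {hd vs}) = x_string n T'"
      using snoc.IH by blast
    then have "conj_circ n (g # cs) (x_string n {hd vs}) = x_string n T"
      using conj_edge_gate_x_string[OF uv True] by (simp add: conj_circ_Cons g_def T'_def)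
    moreover have "\<forall>g'\<in>set (g # cs). is_2q g' \<and> gate_ok n E g'"
      using cs(1) uv snoc.hyps(3) by (simp add: g_def)
    ultimately show ?thesis
      using cs(2) hd by (intro exI[of _ "g # cs"]) simp
  qed
qed

lemma ex_clifford_circuit_pauli_string:
  assumes "connected_simple_graph n E" "\<exists>i<n. f i \<noteq> PI"
  shows "\<exists>us r. (\<forall>g\<in>set us. gate_ok n E g \<and> \<not> is_Rx g) \<and> r < n \<and>
    length (filter is_HS us) \<le> n \<and> length (filter is_2q us) \<le> n - 1 \<and>
    conj_circ n us (x_string n {r}) = pauli_string n f"
proof -
  have edges: "\<And>x y. E x y \<Longrightarrow> x < n \<and> y < n" and irrefl: "irreflp E"
    and conn: "\<And>x y. x < n \<Longrightarrow> y < n \<Longrightarrow> E\<^sup>*\<^sup>* x y"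
    using assms(1) by (auto simp: connected_simple_graph_def irreflp_def)
  define T where "T = {i. i < n \<and> f i \<noteq> PI}"
  obtain i0 where "i0 \<in> T"
    using assms(2) by (auto simp: T_def)
  then obtain vs where vs: "spanning_order E vs" "distinct vs" "set vs = {..<n}"
    using spanning_order_exists[of "{..<n}" i0 E] edges conn by (auto simp: T_def)
  then obtain cs where cs: "\<forall>g\<in>set cs. is_2q g \<and> gate_ok n E g" "length cs < length vs"
      "conj_circ n cs (x_string n {hd vs}) = x_string n T"
    using spanning_order_reduce_x_string[OF vs(1) _ _ edges irrefl, of T] \<open>i0 \<in> T\<close> by (auto simp: T_def)
  define hs where "hs = basis_change_circuit f n"
  have hs: "\<forall>g\<in>set hs. is_HS g \<and> gate_ok n E g" "length hs \<le> n"
    using basis_change_circuit_gates[of n n] length_basis_change_circuit by (auto simp: hs_def)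
  have "x_string n T = pauli_string n (\<lambda>i. if i < n then pauli_to_X (f i) else f i)"
    unfolding x_string_def by (rule pauli_string_cong) (simp add: T_def pauli_to_X_def)
  then have "conj_circ n (hs @ cs) (x_string n {hd vs}) = pauli_string n f"
    using cs(3) conj_basis_change_circuit[of n n] by (simp add: hs_def conj_circ_append)
  moreover have "hd vs < n"
    using hd_in_set[OF spanning_order_not_Nil[OF vs(1)]] vs(3) by auto
  moreover have "filter is_HS (hs @ cs) = hs" "filter is_2q (hs @ cs) = cs"
    using hs(1) cs(1) by (auto simp: filter_id_conv filter_empty_conv dest: gate_classes_disjoint)
  moreover have "length vs = n"
    using distinct_card[OF vs(2)] vs(3) by simp
  ultimately show ?thesis
    using hs cs(1,2) by (intro exI[of _ "hs @ cs"] exI[of _ "hd vs"]) (auto dest: gate_classes_disjoint)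
qed

lemma pauli1_PI: "pauli1 PI = 1\<^sub>m 2"
  by (rule eq_matI) (auto simp: pauli1_def)

lemma embed1_X: "q < n \<Longrightarrow> embed1 n q (pauli1 PX) = x_string n {q}"
  unfolding embed1_eq_tensor_mat x_string_def pauli_string_def
  by (rule tensor_mat_cong) (simp add: pauli1_PI)

lemma circ_mat_conj_Rx:
  assumes "\<forall>g\<in>set us. gate_ok n E g \<and> \<not> is_Rx g" "irreflp E" "r < n"
    and "conj_circ n us (x_string n {r}) = pauli_string n f"
  shows "circ_mat n (us @ Rx \<theta> r # circuit_inv us) = mat_exp ((\<i> * complex_of_real (\<theta> / 2)) \<cdot>\<^sub>m pauli_string n f)"
proof -
  define c where "c = \<i> * complex_of_real (\<theta> / 2)"
  have "rot_x \<theta> = cosh c \<cdot>\<^sub>m 1\<^sub>m 2 + sinh c \<cdot>\<^sub>m pauli1 PX"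
    unfolding rot_x_def c_def[symmetric] by (simp add: mat_exp_smult_involution pauli1_mult_self)
  then have "embed1 n r (rot_x \<theta>) = cosh c \<cdot>\<^sub>m 1\<^sub>m (2 ^ n) + sinh c \<cdot>\<^sub>m x_string n {r}"
    using assms(3) by (simp add: embed1_lincomb embed1_one embed1_X)
  then have "circ_mat n (us @ Rx \<theta> r # circuit_inv us)
      = cosh c \<cdot>\<^sub>m conj_circ n us (1\<^sub>m (2 ^ n)) + sinh c \<cdot>\<^sub>m conj_circ n us (x_string n {r})"
    by (simp add: circ_mat_append conj_circ_lincomb flip: conj_circ_def)
  also have "\<dots> = mat_exp (c \<cdot>\<^sub>m pauli_string n f)"
    using assms(4)
    by (simp add: conj_circ_one[OF assms(1,2)] mat_exp_smult_involution[OF pauli_string_carrier pauli_string_mult_self])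
  finally show ?thesis
    by (simp add: c_def)
qed

lemma conj_Rx_circuit_gates:
  fixes \<theta> :: real
  assumes "\<forall>g\<in>set us. gate_ok n E g \<and> \<not> is_Rx g" "r < n"
  defines "gs \<equiv> us @ Rx \<theta> r # circuit_inv us"
  shows "\<forall>g\<in>set gs. gate_ok n E g" and "length (filter is_Rx gs) = 1"
    and "\<forall>\<phi> q. Rx \<phi> q \<in> set gs \<longrightarrow> \<phi> = \<theta>"
    and "length (filter is_HS gs) = 2 * length (filter is_HS us)"
    and "length (filter is_2q gs) = 2 * length (filter is_2q us)"
proof -
  have "filter is_Rx gs = [Rx \<theta> r]"
    using assms(1) by (simp add: gs_def filter_circuit_inv filter_empty_conv) (simp add: circuit_inv_def)
  moreover have "\<phi> = \<theta>" if "Rx \<phi> q \<in> set gs" for \<phi> q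
  proof -
    have "Rx \<phi> q \<in> set (filter is_Rx gs)"
      using that by simp
    then show ?thesis
      using \<open>filter is_Rx gs = [Rx \<theta> r]\<close> by simp
  qed
  ultimately show "length (filter is_Rx gs) = 1" "\<forall>\<phi> q. Rx \<phi> q \<in> set gs \<longrightarrow> \<phi> = \<theta>"
    by simp_all
  show "\<forall>g\<in>set gs. gate_ok n E g"
    using assms(1,2) by (auto simp: gs_def circuit_inv_def)
  show "length (filter is_HS gs) = 2 * length (filter is_HS us)"
    "length (filter is_2q gs) = 2 * length (filter is_2q us)"
    by (simp_all add: gs_def filter_circuit_inv)
qed

theorem proposition3p5:
  fixes n :: nat and E :: "nat \<Rightarrow> nat \<Rightarrow> bool" and ps :: "pauli list" and \<theta> :: real
  assumes "connected_simple_graph n E"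
    and "length ps = n"
    and "non_identity_pauli ps"
  shows "\<exists>gs :: gate list.
           (\<forall>g\<in>set gs. gate_ok n E g) \<and>
           length (filter is_Rx gs) = 1 \<and>
           (\<forall>\<phi> q. Rx \<phi> q \<in> set gs \<longrightarrow> \<phi> = \<theta>) \<and>
           length (filter is_HS gs) \<le> 2 * n \<and>
           length (filter is_2q gs) \<le> 2 * n - 2 \<and>
           circ_mat n gs = mat_exp ((\<i> * complex_of_real (\<theta> / 2)) \<cdot>\<^sub>m pauli_mat ps)"
proof -
  have "\<exists>i<n. ps ! i \<noteq> PI"
    using assms(2,3) by (simp add: non_identity_pauli_def)
  then obtain us r where us: "\<forall>g\<in>set us. gate_ok n E g \<and> \<not> is_Rx g" "r < n"
      "length (filter is_HS us) \<le> n" "length (filter is_2q us) \<le> n - 1"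
      "conj_circ n us (x_string n {r}) = pauli_string n (nth ps)"
    using ex_clifford_circuit_pauli_string[OF assms(1), of "nth ps"] by blast
  have "irreflp E"
    using assms(1) by (simp add: connected_simple_graph_def irreflp_def)
  then have "circ_mat n (us @ Rx \<theta> r # circuit_inv us) = mat_exp ((\<i> * complex_of_real (\<theta> / 2)) \<cdot>\<^sub>m pauli_mat ps)"
    using circ_mat_conj_Rx[OF us(1) _ us(2,5)] assms(2) by (simp add: pauli_mat_eq_pauli_string)
  then show ?thesis
    using conj_Rx_circuit_gates[OF us(1,2), of \<theta>] us(3,4)
    by (intro exI[of _ "us @ Rx \<theta> r # circuit_inv us"]) simp
qed

end
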